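(* Let $\mu$ be a pure-state ensemble on $\mathbb{C}^d$ and let $D(I)$ be its information-disturbance frontier. Let $I$ be an achievable information value lying on the upward-sloping portion of the frontier, i.e. $D(I')>D(I)$ for every achievable $I'>I$. If there is a measurement procedure achieving information gain $I$ and disturbance $D(I)$, then there is a measurement procedure with one-term conditional dynamics achieving information gain $I$ and disturbance $D(I)$.
   Context: A measurement procedure on $\mathbb{C}^d$ consists of a finite POVM $\{F_b\}$ (positive semidefinite, $\sum_b F_b=I$) together with operators $A_{bi}$ (finitely many for each $b$) with $\sum_i A_{bi}^\dagger A_{bi}=F_b$. It has one-term conditional dynamics if for each $b$ there is a single operator $A_b$ (so $A_b^\dagger A_b=F_b$). With $p(b|\psi)=\langle\psi|F_b|\psi\rangle$, $p(b)=\int d\mu(\psi)p(b|\psi)$, the information gain is $-\sum_b p(b)\log p(b)+\int d\mu(\psi)\sum_b p(b|\psi)\log p(b|\psi)$, and the disturbance is $1-\int d\mu(\psi)\sum_{b,i}|\langle\psi|A_{bi}|\psi\rangle|^2$. $D(I)$ is the infimum of the disturbance over all measurement procedures with information gain exactly $I$. *)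

theory Defs
  imports "HOL-Analysis.Analysis" "HOL-Probability.Probability"
begin

definition adj :: "complex ^ 'd ^ 'd \<Rightarrow> complex ^ 'd ^ 'd" where
  "adj A = (\<chi> i j. cnj (A $ j $ i))"

definition qform :: "complex ^ 'd ^ 'd \<Rightarrow> complex ^ 'd \<Rightarrow> complex" where
  "qform A \<psi> = (\<Sum>i\<in>UNIV. cnj (\<psi> $ i) * (A *v \<psi>) $ i)"

definition psd :: "complex ^ 'd ^ 'd \<Rightarrow> bool" where
  "psd A \<longleftrightarrow> (\<forall>v. Im (qform A v) = 0 \<and> Re (qform A v) \<ge> 0)"

definition pure_state_ensemble :: "(complex ^ 'd) measure \<Rightarrow> bool" where
  "pure_state_ensemble \<mu> \<longleftrightarrow> prob_space \<mu> \<and> sets \<mu> = sets borel \<and>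
     (AE \<psi> in \<mu>. norm \<psi> = 1)"

record ('d::finite) mproc =
  outcomes :: "nat set"
  povm :: "nat \<Rightarrow> complex ^ 'd ^ 'd"
  kidx :: "nat \<Rightarrow> nat set"
  kraus :: "nat \<Rightarrow> nat \<Rightarrow> complex ^ 'd ^ 'd"

definition measurement_procedure :: "'d::finite mproc \<Rightarrow> bool" where
  "measurement_procedure P \<longleftrightarrow>
     finite (outcomes P) \<and>
     (\<forall>b\<in>outcomes P. psd (povm P b)) \<and>
     (\<Sum>b\<in>outcomes P. povm P b) = mat 1 \<and>
     (\<forall>b\<in>outcomes P. finite (kidx P b) \<and>
        (\<Sum>i\<in>kidx P b. adj (kraus P b i) ** kraus P b i) = povm P b)"

definition one_term :: "'d::finite mproc \<Rightarrow> bool" where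
  "one_term P \<longleftrightarrow> (\<forall>b\<in>outcomes P. \<exists>i. kidx P b = {i})"

definition pcond :: "'d::finite mproc \<Rightarrow> nat \<Rightarrow> complex ^ 'd \<Rightarrow> real" where
  "pcond P b \<psi> = Re (qform (povm P b) \<psi>)"

definition pout :: "(complex ^ 'd) measure \<Rightarrow> 'd::finite mproc \<Rightarrow> nat \<Rightarrow> real" where
  "pout \<mu> P b = (\<integral>\<psi>. pcond P b \<psi> \<partial>\<mu>)"

text \<open>Information gain (natural logarithm; 0 log 0 = 0 since ln 0 = 0 in Isabelle).\<close>
definition info_gain :: "(complex ^ 'd) measure \<Rightarrow> 'd::finite mproc \<Rightarrow> real" where
  "info_gain \<mu> P =
     - (\<Sum>b\<in>outcomes P. pout \<mu> P b * ln (pout \<mu> P b))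
     + (\<integral>\<psi>. (\<Sum>b\<in>outcomes P. pcond P b \<psi> * ln (pcond P b \<psi>)) \<partial>\<mu>)"

definition disturbance :: "(complex ^ 'd) measure \<Rightarrow> 'd::finite mproc \<Rightarrow> real" where
  "disturbance \<mu> P =
     1 - (\<integral>\<psi>. (\<Sum>b\<in>outcomes P. \<Sum>i\<in>kidx P b. (cmod (qform (kraus P b i) \<psi>))^2) \<partial>\<mu>)"

definition achievable :: "(complex ^ 'd) measure \<Rightarrow> real \<Rightarrow> bool" where
  "achievable \<mu> I \<longleftrightarrow>
     (\<exists>P::'d::finite mproc. measurement_procedure P \<and> info_gain \<mu> P = I)"

definition Dfront :: "(complex ^ 'd) measure \<Rightarrow> real \<Rightarrow> real" where
  "Dfront \<mu> I = Inf {disturbance \<mu> P | P::'d::finite mproc.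
                         measurement_procedure P \<and> info_gain \<mu> P = I}"

end

theory Submission
  imports Defs
begin

(* Splitting every outcome b of a measurement procedure into one outcome per Kraus operator A_bi
   gives one-term conditional dynamics and leaves the disturbance unchanged. It cannot decrease
   the information gain: the gain is a sum over outcomes of  int p ln p - pbar ln pbar  (p the
   likelihood of the outcome, pbar its mean), and this functional is subadditive under a splitting
   p = sum_i p_i, by Gibbs' inequality applied pointwise and then integrated. So the fine-grained
   procedure attains some I' >= I with disturbance D(I) >= D(I'), and I' > I would contradict the
   strict increase of D to the right of I. *)

lemma diff_le_mult_ln_diff:
  fixes a c :: real
  assumes "0 \<le> a" and "0 < c"
  shows "a - c \<le> a * (ln a - ln c)"
proof (cases "a = 0")
  case False
  with assms have "0 < a" by simp
  have "ln (c / a) \<le> c / a - 1"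
    using \<open>0 < a\<close> assms(2) by (intro ln_le_minus_one) simp
  then have "a * (ln c - ln a) \<le> a * (c / a - 1)"
    using \<open>0 < a\<close> assms(2) by (simp add: ln_div)
  then show ?thesis
    using \<open>0 < a\<close> by (simp add: algebra_simps)
qed (use assms in simp)

lemma abs_mult_ln_le_1:
  fixes x :: real
  assumes "0 \<le> x" and "x \<le> 1"
  shows "\<bar>x * ln x\<bar> \<le> 1"
proof -
  have "x - 1 \<le> x * ln x"
    using diff_le_mult_ln_diff[of x 1] assms(1) by simp
  moreover have "x * ln x \<le> 0"
    using assms by (cases "x = 0") (auto intro: mult_nonneg_nonpos)
  ultimately show ?thesis
    using assms by linarith
qed

lemma gibbs_inequality:
  fixes a b :: "'i \<Rightarrow> real"
  assumes "finite K"
    and a_nonneg: "\<And>i. i \<in> K \<Longrightarrow> 0 \<le> a i"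
    and b_nonneg: "\<And>i. i \<in> K \<Longrightarrow> 0 \<le> b i"
    and supp: "\<And>i. i \<in> K \<Longrightarrow> a i \<noteq> 0 \<Longrightarrow> 0 < b i"
  shows "(\<Sum>i\<in>K. a i * (ln (b i) - ln (sum b K)))
           \<le> (\<Sum>i\<in>K. a i * ln (a i)) - sum a K * ln (sum a K)"
proof (cases "sum a K = 0")
  case True
  then have "\<forall>i\<in>K. a i = 0"
    using sum_nonneg_eq_0_iff[OF assms(1)] a_nonneg by blast
  then show ?thesis
    using True by simp
next
  case False
  define A B where "A = sum a K" and "B = sum b K"
  obtain j where "j \<in> K" and "a j \<noteq> 0"
    using False by (meson sum.neutral)
  have "0 < A"
    using False a_nonneg unfolding A_def by (simp add: order_less_le sum_nonneg)
  have "b j \<le> B"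
    unfolding B_def by (rule member_le_sum) (use \<open>j \<in> K\<close> b_nonneg assms(1) in auto)
  then have "0 < B"
    using supp[OF \<open>j \<in> K\<close> \<open>a j \<noteq> 0\<close>] by simp
  have termwise: "a i - A * b i / B \<le> a i * ln (a i) - a i * ln A - a i * (ln (b i) - ln B)"
    if "i \<in> K" for i
  proof (cases "a i = 0")
    case True
    then show ?thesis
      using b_nonneg[OF that] \<open>0 < A\<close> \<open>0 < B\<close> by simp
  next
    case False
    then have "0 < a i" and "0 < b i"
      using a_nonneg[OF that] supp[OF that] by auto
    then have "ln (A * b i / B) = ln A + ln (b i) - ln B"
      using \<open>0 < A\<close> \<open>0 < B\<close> by (simp add: ln_mult ln_div)
    with diff_le_mult_ln_diff[of "a i" "A * b i / B"] \<open>0 < a i\<close> \<open>0 < b i\<close> \<open>0 < A\<close> \<open>0 < B\<close>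
    show ?thesis
      by (simp add: algebra_simps)
  qed
  have "(\<Sum>i\<in>K. a i - A * b i / B) = 0"
    using \<open>0 < B\<close> unfolding A_def B_def
    by (simp add: sum_subtractf sum_divide_distrib[symmetric] sum_distrib_left[symmetric])
  then have "0 \<le> (\<Sum>i\<in>K. a i * ln (a i) - a i * ln A - a i * (ln (b i) - ln B))"
    using sum_mono[of K "\<lambda>i. a i - A * b i / B", OF termwise] by simp
  then show ?thesis
    unfolding A_def B_def by (simp add: sum_subtractf sum_distrib_right[symmetric])
qed

lemma (in prob_space) integrable_mult_ln:
  fixes g :: "'a \<Rightarrow> real"
  assumes [measurable]: "g \<in> borel_measurable M"
    and "AE x in M. 0 \<le> g x \<and> g x \<le> 1"
  shows "integrable M (\<lambda>x. g x * ln (g x))"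
proof (rule integrable_const_bound[where B = 1])
  show "AE x in M. norm (g x * ln (g x)) \<le> 1"
    using assms(2) by eventually_elim (simp add: abs_mult_ln_le_1)
qed measurable

lemma (in prob_space) AE_nonzero_imp_integral_pos:
  fixes g :: "'a \<Rightarrow> real"
  assumes "integrable M g" and "\<And>x. 0 \<le> g x"
  shows "AE x in M. g x \<noteq> 0 \<longrightarrow> 0 < (\<integral>x. g x \<partial>M)"
proof (cases "(\<integral>x. g x \<partial>M) = 0")
  case True
  then have "AE x in M. g x = 0"
    using integral_nonneg_eq_0_iff_AE[of M g] assms by auto
  then show ?thesis
    by eventually_elim simp
qed (use assms in \<open>simp add: order_less_le\<close>)

definition outcome_info :: "'a measure \<Rightarrow> ('a \<Rightarrow> real) \<Rightarrow> real" where
  "outcome_info M g = (\<integral>x. g x * ln (g x) \<partial>M) - (\<integral>x. g x \<partial>M) * ln (\<integral>x. g x \<partial>M)"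

lemma (in prob_space) outcome_info_sum_le:
  fixes f :: "'i \<Rightarrow> 'a \<Rightarrow> real"
  assumes "finite K"
    and meas [measurable]: "\<And>i. i \<in> K \<Longrightarrow> f i \<in> borel_measurable M"
    and nonneg: "\<And>i x. i \<in> K \<Longrightarrow> 0 \<le> f i x"
    and sum_le_1: "AE x in M. (\<Sum>i\<in>K. f i x) \<le> 1"
  shows "outcome_info M (\<lambda>x. \<Sum>i\<in>K. f i x) \<le> (\<Sum>i\<in>K. outcome_info M (f i))"
proof -
  define F where "F x = (\<Sum>i\<in>K. f i x)" for x
  define q where "q i = (\<integral>x. f i x \<partial>M)" for i
  have [measurable]: "F \<in> borel_measurable M"
    unfolding F_def by measurable
  have f_unit: "AE x in M. 0 \<le> f i x \<and> f i x \<le> 1" if "i \<in> K" for i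
    using sum_le_1
  proof eventually_elim
    case (elim x)
    have "f i x \<le> (\<Sum>i\<in>K. f i x)"
      by (rule member_le_sum) (use that nonneg \<open>finite K\<close> in auto)
    with elim show ?case
      using nonneg[OF that] by simp
  qed
  have F_unit: "AE x in M. 0 \<le> F x \<and> F x \<le> 1"
    using sum_le_1 unfolding F_def by eventually_elim (simp add: nonneg sum_nonneg)
  have int_f: "integrable M (f i)" if "i \<in> K" for i
    by (rule integrable_const_bound[where B = 1]) (use f_unit[OF that] that in auto)
  have int_f_ln: "integrable M (\<lambda>x. f i x * ln (f i x))" if "i \<in> K" for i
    using integrable_mult_ln[OF meas[OF that] f_unit[OF that]] .
  have int_F_ln: "integrable M (\<lambda>x. F x * ln (F x))"
    using integrable_mult_ln[OF _ F_unit] by simp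
  have integral_F: "(\<integral>x. F x \<partial>M) = sum q K"
    unfolding F_def q_def by (rule Bochner_Integration.integral_sum) (rule int_f)
  have q_nonneg: "0 \<le> q i" if "i \<in> K" for i
    unfolding q_def using nonneg that by simp
  have "AE x in M. f i x \<noteq> 0 \<longrightarrow> 0 < q i" if "i \<in> K" for i
    unfolding q_def using AE_nonzero_imp_integral_pos[OF int_f[OF that] nonneg[OF that]] by simp
  then have "AE x in M. \<forall>i\<in>K. f i x \<noteq> 0 \<longrightarrow> 0 < q i"
    using \<open>finite K\<close> by (intro AE_finite_allI) auto
  then have pointwise: "AE x in M. (\<Sum>i\<in>K. f i x * (ln (q i) - ln (sum q K)))
                          \<le> (\<Sum>i\<in>K. f i x * ln (f i x)) - F x * ln (F x)"
    unfolding F_def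
    by eventually_elim (rule gibbs_inequality; use \<open>finite K\<close> nonneg q_nonneg in auto)
  have "(\<Sum>i\<in>K. q i * (ln (q i) - ln (sum q K)))
          = (\<integral>x. (\<Sum>i\<in>K. f i x * (ln (q i) - ln (sum q K))) \<partial>M)"
    unfolding q_def by (subst Bochner_Integration.integral_sum) (use int_f in auto)
  also have "\<dots> \<le> (\<integral>x. (\<Sum>i\<in>K. f i x * ln (f i x)) - F x * ln (F x) \<partial>M)"
    by (rule integral_mono_AE[OF _ _ pointwise]) (use int_f int_f_ln int_F_ln in auto)
  also have "\<dots> = (\<Sum>i\<in>K. \<integral>x. f i x * ln (f i x) \<partial>M) - (\<integral>x. F x * ln (F x) \<partial>M)"
    using int_f_ln int_F_ln by (simp add: Bochner_Integration.integral_sum)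
  finally show ?thesis
    unfolding outcome_info_def F_def[symmetric] integral_F
    by (simp add: q_def right_diff_distrib sum_subtractf sum_distrib_right)
qed

lemma qform_add: "qform (A + B) v = qform A v + qform B v"
  unfolding qform_def by (simp add: matrix_vector_mult_add_rdistrib distrib_left sum.distrib)

lemma qform_zero [simp]: "qform 0 v = 0"
  unfolding qform_def by simp

lemma qform_sum: "qform (\<Sum>i\<in>S. A i) v = (\<Sum>i\<in>S. qform (A i) v)"
  by (induction S rule: infinite_finite_induct) (simp_all add: qform_add)

lemma power2_norm_vec: "(norm v)\<^sup>2 = (\<Sum>i\<in>UNIV. (norm (v $ i))\<^sup>2)"
  unfolding norm_vec_def L2_set_def by (simp add: sum_nonneg)

lemma qform_adj_mult: "qform (adj A ** A) v = of_real ((norm (A *v v))\<^sup>2)"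
proof -
  define w where "w = A *v v"
  have "(adj A ** A) *v v = adj A *v w"
    unfolding w_def by (simp add: matrix_vector_mul_assoc)
  then have "qform (adj A ** A) v = (\<Sum>i\<in>UNIV. \<Sum>j\<in>UNIV. w $ j * cnj (A $ j $ i * v $ i))"
    unfolding qform_def by (simp add: matrix_vector_mult_def adj_def sum_distrib_left mult_ac)
  also have "\<dots> = (\<Sum>j\<in>UNIV. w $ j * cnj (w $ j))"
    unfolding w_def by (subst sum.swap) (simp add: matrix_vector_mult_def sum_distrib_left)
  also have "\<dots> = of_real ((norm w)\<^sup>2)"
    unfolding power2_norm_vec of_real_sum by (simp add: complex_norm_square del: of_real_power)
  finally show ?thesis
    unfolding w_def .
qed

lemma qform_mat_1: "qform (mat 1) v = of_real ((norm v)\<^sup>2)"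
proof -
  have "qform (mat 1) v = (\<Sum>i\<in>UNIV. v $ i * cnj (v $ i))"
    unfolding qform_def by (simp add: mult.commute)
  then show ?thesis
    unfolding power2_norm_vec of_real_sum by (simp add: complex_norm_square del: of_real_power)
qed

lemma norm_qform_le: "norm (qform A v) \<le> norm v * norm (A *v v)"
proof -
  have "norm (qform A v) \<le> (\<Sum>i\<in>UNIV. norm (v $ i) * norm ((A *v v) $ i))"
    unfolding qform_def by (rule order_trans[OF norm_sum]) (simp add: norm_mult)
  also have "\<dots> \<le> norm v * norm (A *v v)"
    unfolding norm_vec_def using L2_set_mult_ineq[where f = "\<lambda>i. norm (v $ i)" and g = "\<lambda>i. norm ((A *v v) $ i)"]
    by simp
  finally show ?thesis .
qed

lemma borel_measurable_qform [measurable]: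
  assumes "sets M = sets borel"
  shows "qform A \<in> borel_measurable M"
proof -
  have "qform A \<in> borel_measurable borel"
    unfolding qform_def[abs_def] matrix_vector_mult_def
    by (intro borel_measurable_continuous_onI continuous_intros)
  then show ?thesis
    by (simp add: measurable_cong_sets[OF assms refl])
qed

lemma pcond_eq_sum_kraus:
  assumes "measurement_procedure P" and "b \<in> outcomes P"
  shows "pcond P b \<psi> = (\<Sum>i\<in>kidx P b. (norm (kraus P b i *v \<psi>))\<^sup>2)"
proof -
  have "povm P b = (\<Sum>i\<in>kidx P b. adj (kraus P b i) ** kraus P b i)"
    using assms unfolding measurement_procedure_def by auto
  then show ?thesis
    unfolding pcond_def by (simp add: qform_sum qform_adj_mult)
qed

lemma pcond_nonneg:
  assumes "measurement_procedure P" and "b \<in> outcomes P"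
  shows "0 \<le> pcond P b \<psi>"
  using assms unfolding measurement_procedure_def psd_def pcond_def by auto

lemma sum_pcond:
  assumes "measurement_procedure P" and "norm \<psi> = 1"
  shows "(\<Sum>b\<in>outcomes P. pcond P b \<psi>) = 1"
proof -
  have "(\<Sum>b\<in>outcomes P. povm P b) = mat 1"
    using assms(1) unfolding measurement_procedure_def by auto
  then have "(\<Sum>b\<in>outcomes P. pcond P b \<psi>) = Re (qform (mat 1) \<psi>)"
    unfolding pcond_def by (metis Re_sum qform_sum)
  then show ?thesis
    using assms(2) by (simp add: qform_mat_1)
qed

lemma pcond_le_1:
  assumes "measurement_procedure P" and "b \<in> outcomes P" and "norm \<psi> = 1"
  shows "pcond P b \<psi> \<le> 1"
proof -
  have "finite (outcomes P)"
    using assms(1) unfolding measurement_procedure_def by simp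
  then have "pcond P b \<psi> \<le> (\<Sum>b\<in>outcomes P. pcond P b \<psi>)"
    using assms(1,2) pcond_nonneg by (intro member_le_sum) auto
  with sum_pcond[OF assms(1,3)] show ?thesis
    by simp
qed

lemma borel_measurable_pcond [measurable]:
  "sets M = sets borel \<Longrightarrow> pcond P b \<in> borel_measurable M"
  unfolding pcond_def[abs_def] by measurable

lemma info_gain_eq_sum_outcome_info:
  assumes "pure_state_ensemble \<mu>" and P: "measurement_procedure P"
  shows "info_gain \<mu> P = (\<Sum>b\<in>outcomes P. outcome_info \<mu> (pcond P b))"
proof -
  have sets: "sets \<mu> = sets borel" and unit: "AE \<psi> in \<mu>. norm \<psi> = 1"
    and "prob_space \<mu>"
    using assms(1) unfolding pure_state_ensemble_def by auto
  interpret prob_space \<mu> by fact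
  have "integrable \<mu> (\<lambda>\<psi>. pcond P b \<psi> * ln (pcond P b \<psi>))" if "b \<in> outcomes P" for b
    using unit
    by (intro integrable_mult_ln borel_measurable_pcond[OF sets])
      (auto intro: pcond_nonneg pcond_le_1 P that)
  then show ?thesis
    unfolding info_gain_def outcome_info_def pout_def
    by (simp add: Bochner_Integration.integral_sum sum_subtractf)
qed

lemma disturbance_nonneg:
  assumes "pure_state_ensemble \<mu>" and P: "measurement_procedure P"
  shows "0 \<le> disturbance \<mu> P"
proof -
  define fidelity where
    "fidelity \<psi> = (\<Sum>b\<in>outcomes P. \<Sum>i\<in>kidx P b. (norm (qform (kraus P b i) \<psi>))\<^sup>2)" for \<psi>
  have "prob_space \<mu>" and unit: "AE \<psi> in \<mu>. norm \<psi> = 1"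
    using assms(1) unfolding pure_state_ensemble_def by auto
  interpret prob_space \<mu> by fact
  have "AE \<psi> in \<mu>. fidelity \<psi> \<le> 1"
    using unit
  proof eventually_elim
    case (elim \<psi>)
    have "fidelity \<psi> \<le> (\<Sum>b\<in>outcomes P. \<Sum>i\<in>kidx P b. (norm (kraus P b i *v \<psi>))\<^sup>2)"
      unfolding fidelity_def
      using norm_qform_le[of _ \<psi>] elim by (intro sum_mono power_mono) auto
    also have "\<dots> = 1"
      using sum_pcond[OF P elim] pcond_eq_sum_kraus[OF P] by simp
    finally show ?case .
  qed
  then have "(\<integral>\<psi>. fidelity \<psi> \<partial>\<mu>) \<le> 1"
    by (cases "integrable \<mu> fidelity") (simp_all add: integral_le_const not_integrable_integral_eq)
  then show ?thesis
    unfolding disturbance_def fidelity_def by simp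
qed

lemma Dfront_le_disturbance:
  assumes "pure_state_ensemble \<mu>" and "measurement_procedure P"
  shows "Dfront \<mu> (info_gain \<mu> P) \<le> disturbance \<mu> P"
  unfolding Dfront_def
  by (rule cInf_lower) (use assms disturbance_nonneg in \<open>auto intro!: bdd_belowI[of _ 0]\<close>)

definition fine_grain :: "'d::finite mproc \<Rightarrow> 'd mproc" where
  "fine_grain P =
     \<lparr>outcomes = prod_encode ` Sigma (outcomes P) (kidx P),
      povm = (\<lambda>n. case prod_decode n of (b, i) \<Rightarrow> adj (kraus P b i) ** kraus P b i),
      kidx = (\<lambda>n. {0}),
      kraus = (\<lambda>n j. case prod_decode n of (b, i) \<Rightarrow> kraus P b i)\<rparr>"

lemma fine_grain_simps:
  "outcomes (fine_grain P) = prod_encode ` Sigma (outcomes P) (kidx P)"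
  "povm (fine_grain P) (prod_encode (b, i)) = adj (kraus P b i) ** kraus P b i"
  "kidx (fine_grain P) n = {0}"
  "kraus (fine_grain P) (prod_encode (b, i)) j = kraus P b i"
  unfolding fine_grain_def by simp_all

lemma sum_prod_encode_Sigma:
  assumes "finite B" and "\<And>b. b \<in> B \<Longrightarrow> finite (K b)"
  shows "(\<Sum>n\<in>prod_encode ` Sigma B K. g n) = (\<Sum>b\<in>B. \<Sum>i\<in>K b. g (prod_encode (b, i)))"
proof -
  have "(\<Sum>n\<in>prod_encode ` Sigma B K. g n) = (\<Sum>x\<in>Sigma B K. g (prod_encode x))"
    by (simp add: sum.reindex inj_on_def)
  also have "\<dots> = (\<Sum>b\<in>B. \<Sum>i\<in>K b. g (prod_encode (b, i)))"
    using assms by (simp add: sum.Sigma case_prod_beta')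
  finally show ?thesis .
qed

lemma measurement_procedure_fine_grain:
  assumes "measurement_procedure P"
  shows "measurement_procedure (fine_grain P)"
proof -
  have fin: "finite (outcomes P)" "\<And>b. b \<in> outcomes P \<Longrightarrow> finite (kidx P b)"
    and "\<And>b. b \<in> outcomes P \<Longrightarrow> (\<Sum>i\<in>kidx P b. adj (kraus P b i) ** kraus P b i) = povm P b"
    and "(\<Sum>b\<in>outcomes P. povm P b) = mat 1"
    using assms unfolding measurement_procedure_def by auto
  then have "(\<Sum>n\<in>outcomes (fine_grain P). povm (fine_grain P) n) = mat 1"
    by (simp add: fine_grain_simps sum_prod_encode_Sigma)
  moreover have "psd (adj A ** A)" for A :: "complex ^ 'd ^ 'd"
    unfolding psd_def qform_adj_mult by simp
  ultimately show ?thesis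
    using fin unfolding measurement_procedure_def by (auto simp: fine_grain_simps)
qed

lemma one_term_fine_grain: "one_term (fine_grain P)"
  unfolding one_term_def fine_grain_simps by simp

lemma disturbance_fine_grain:
  assumes "measurement_procedure P"
  shows "disturbance \<mu> (fine_grain P) = disturbance \<mu> P"
proof -
  have "finite (outcomes P)" "\<And>b. b \<in> outcomes P \<Longrightarrow> finite (kidx P b)"
    using assms unfolding measurement_procedure_def by auto
  then show ?thesis
    unfolding disturbance_def by (simp add: fine_grain_simps sum_prod_encode_Sigma)
qed

lemma info_gain_le_fine_grain:
  assumes \<mu>: "pure_state_ensemble \<mu>" and P: "measurement_procedure P"
  shows "info_gain \<mu> P \<le> info_gain \<mu> (fine_grain P)"
proof -
  define f where "f b i \<psi> = (norm (kraus P b i *v \<psi>))\<^sup>2" for b i \<psi>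
  have "prob_space \<mu>" and sets: "sets \<mu> = sets borel" and unit: "AE \<psi> in \<mu>. norm \<psi> = 1"
    using \<mu> unfolding pure_state_ensemble_def by auto
  interpret prob_space \<mu> by fact
  have fin: "finite (outcomes P)" "\<And>b. b \<in> outcomes P \<Longrightarrow> finite (kidx P b)"
    using P unfolding measurement_procedure_def by auto
  have pcond: "pcond P b = (\<lambda>\<psi>. \<Sum>i\<in>kidx P b. f b i \<psi>)" if "b \<in> outcomes P" for b
    unfolding f_def using pcond_eq_sum_kraus[OF P that] by auto
  have fine_pcond: "pcond (fine_grain P) (prod_encode (b, i)) = f b i" for b i
    unfolding f_def pcond_def[abs_def] fine_grain_simps qform_adj_mult by simp
  have "outcome_info \<mu> (pcond P b) \<le> (\<Sum>i\<in>kidx P b. outcome_info \<mu> (f b i))"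
    if "b \<in> outcomes P" for b
    unfolding pcond[OF that]
  proof (rule outcome_info_sum_le)
    show "f b i \<in> borel_measurable \<mu>" for i
      unfolding fine_pcond[symmetric] using sets by measurable
    show "AE \<psi> in \<mu>. (\<Sum>i\<in>kidx P b. f b i \<psi>) \<le> 1"
      using unit by eventually_elim (metis pcond pcond_le_1 P that)
  qed (use fin that in \<open>auto simp: f_def\<close>)
  then have "info_gain \<mu> P \<le> (\<Sum>b\<in>outcomes P. \<Sum>i\<in>kidx P b. outcome_info \<mu> (f b i))"
    unfolding info_gain_eq_sum_outcome_info[OF \<mu> P] by (rule sum_mono)
  also have "\<dots> = info_gain \<mu> (fine_grain P)"
    unfolding info_gain_eq_sum_outcome_info[OF \<mu> measurement_procedure_fine_grain[OF P]]
    by (simp add: fine_grain_simps sum_prod_encode_Sigma fin fine_pcond)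
  finally show ?thesis .
qed

theorem mainTheorem3:
  fixes \<mu> :: "(complex ^ 'd::finite) measure" and I :: real
  assumes "pure_state_ensemble \<mu>"
    and "achievable \<mu> I"
    and "\<forall>I'. achievable \<mu> I' \<and> I' > I \<longrightarrow> Dfront \<mu> I' > Dfront \<mu> I"
    and "\<exists>P::'d mproc. measurement_procedure P \<and> info_gain \<mu> P = I
           \<and> disturbance \<mu> P = Dfront \<mu> I"
  shows "\<exists>Q::'d mproc. measurement_procedure Q \<and> one_term Q \<and> info_gain \<mu> Q = I
           \<and> disturbance \<mu> Q = Dfront \<mu> I"
proof -
  obtain P :: "'d mproc" where P: "measurement_procedure P"
    and "info_gain \<mu> P = I" and "disturbance \<mu> P = Dfront \<mu> I"
    using assms(4) by blast
  define Q where "Q = fine_grain P"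
  have Q: "measurement_procedure Q" and "one_term Q"
    unfolding Q_def using P by (simp_all add: measurement_procedure_fine_grain one_term_fine_grain)
  have dist_Q: "disturbance \<mu> Q = Dfront \<mu> I"
    unfolding Q_def using P \<open>disturbance \<mu> P = Dfront \<mu> I\<close> by (simp add: disturbance_fine_grain)
  have "I \<le> info_gain \<mu> Q"
    unfolding Q_def using info_gain_le_fine_grain[OF assms(1) P] \<open>info_gain \<mu> P = I\<close> by simp
  moreover have "\<not> I < info_gain \<mu> Q"
  proof
    assume "I < info_gain \<mu> Q"
    moreover have "achievable \<mu> (info_gain \<mu> Q)"
      unfolding achievable_def using Q by blast
    ultimately have "Dfront \<mu> I < Dfront \<mu> (info_gain \<mu> Q)"
      using assms(3) by blast
    with Dfront_le_disturbance[OF assms(1) Q] dist_Q show False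
      by simp
  qed
  ultimately show ?thesis
    using Q \<open>one_term Q\<close> dist_Q by (intro exI[of _ Q]) simp
qed

end
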